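(* Let $m\ge1$ be an integer and write $s_n=s_n^{(m+1,m+2)}$. Then for all $n\ge0$, \[ s_n^2=s_n+2\sum_{k=0}^{n-2m-3}\sum_{r=2m+3}^{n-k}P_{r-2m-3}^{\{-2,m-1,m\}}s_k s_{n-k-r}^2 . \]
   Context: For positive integers $p<q$, $s_n^{(p,q)}$ is defined by $s_n^{(p,q)}=\delta_{0,n}+s_{n-p}^{(p,q)}+s_{n-q}^{(p,q)}$ for $n\ge0$ and $s_n^{(p,q)}=0$ for $n<0$. $\delta_{i,j}$ is $1$ if $i=j$ and $0$ otherwise. For a finite set $W$ of integers, $P_n^W$ is the number of permutations $\pi$ of $\{1,\dots,n\}$ with $\pi(i)-i\in W$ for all $i$ (the permanent of the $n\times n$ $(0,1)$ Toeplitz matrix whose $(i,j)$ entry is $1$ iff $j-i\in W$), with $P_0^W=1$. Empty sums are $0$. *)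

theory Defs
  imports Main "HOL-Combinatorics.Permutations"
begin

text \<open>s_n^{(p,q)}: s_n = [n=0] + s_{n-p} + s_{n-q}, with s_n = 0 for n < 0.
  The guards 0 < p, 0 < q only matter for termination (the paper assumes p, q positive).\<close>
function s_pq :: "nat \<Rightarrow> nat \<Rightarrow> nat \<Rightarrow> nat" where
  "s_pq p q n =
     (if n = 0 then 1 else 0)
     + (if 0 < p \<and> p \<le> n then s_pq p q (n - p) else 0)
     + (if 0 < q \<and> q \<le> n then s_pq p q (n - q) else 0)"
  by auto
termination by (relation "measure (\<lambda>(p,q,n). n)") auto

declare s_pq.simps [simp del]

definition P_perm :: "int set \<Rightarrow> nat \<Rightarrow> nat" where
  "P_perm W n = card {\<pi>. \<pi> permutes {1..n} \<and> (\<forall>i\<in>{1..n}. int (\<pi> i) - int i \<in> W)}"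

end

theory Submission
  imports Defs "HOL-Library.FuncSet"
begin

(* Write s_n for s_n^(m+1,m+2), extended by 0 to negative indices. Squaring the recurrence
   shows that s_n^2 satisfies the recurrence of s_n with inhomogeneous term
   [n = 0] + 2 s_(n-m-1) s_(n-m-2); since s is the fundamental solution of that recurrence,
   s_n^2 = s_n + 2 sum_k s_k s_(n-k-m-1) s_(n-k-m-2).

   A product of two nearby terms is expanded by applying the recurrence to its larger factor:
   for 0 <= e <= m,
     s_(M+e+1) s_M = [e = m] s_M^2 + sum_K G(e,K) s_(M+e-1-K-m)^2,
   where G obeys a two-term recursion in (e,K). Expanding along the first row, the permanent of
   the Toeplitz matrix with offsets {-2, m-1, m}, rows 1..K and columns 0..K without column e
   obeys the same recursion, so G(0,K) = P_K. *)

section \<open>Permanents of 0-1 relations\<close>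

definition rel_bijections ::
    "('a \<Rightarrow> 'a \<Rightarrow> bool) \<Rightarrow> 'a set \<Rightarrow> 'a set \<Rightarrow> ('a \<Rightarrow> 'a) set" where
  "rel_bijections R A B =
     {f. bij_betw f A B \<and> (\<forall>x\<in>A. R x (f x)) \<and> (\<forall>x. x \<notin> A \<longrightarrow> f x = x)}"

definition rel_permanent :: "('a \<Rightarrow> 'a \<Rightarrow> bool) \<Rightarrow> 'a set \<Rightarrow> 'a set \<Rightarrow> nat"
  where
  "rel_permanent R A B = card (rel_bijections R A B)"

lemma finite_rel_bijections:
  assumes "finite A" "finite B"
  shows "finite (rel_bijections R A B)"
proof -
  have "rel_bijections R A B \<subseteq> (\<lambda>g x. if x \<in> A then g x else x) ` (A \<rightarrow>\<^sub>E B)"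
  proof
    fix f assume f: "f \<in> rel_bijections R A B"
    then have "f = (\<lambda>x. if x \<in> A then restrict f A x else x)"
      by (auto simp: rel_bijections_def)
    moreover have "restrict f A \<in> A \<rightarrow>\<^sub>E B"
      using f by (auto simp: rel_bijections_def bij_betw_def)
    ultimately show "f \<in> (\<lambda>g x. if x \<in> A then g x else x) ` (A \<rightarrow>\<^sub>E B)" by blast
  qed
  then show ?thesis
    using assms by (meson finite_PiE finite_imageI finite_subset)
qed

lemma rel_permanent_empty [simp]: "rel_permanent R {} {} = 1"
proof -
  have "rel_bijections R {} {} = {id}" by (auto simp: rel_bijections_def)
  then show ?thesis by (simp add: rel_permanent_def)
qed

lemma rel_permanent_eq_0_if_card_neq:
  assumes "finite A" "card A \<noteq> card B"
  shows "rel_permanent R A B = 0"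
proof -
  have "rel_bijections R A B = {}"
    using assms by (auto simp: rel_bijections_def dest: bij_betw_same_card)
  then show ?thesis by (simp add: rel_permanent_def)
qed

lemma rel_permanent_eq_0_if_uncovered:
  assumes "b \<in> B" "\<forall>x\<in>A. \<not> R x b"
  shows "rel_permanent R A B = 0"
proof -
  have "rel_bijections R A B = {}"
    using assms by (fastforce simp: rel_bijections_def bij_betw_def)
  then show ?thesis by (simp add: rel_permanent_def)
qed

lemma rel_bijections_remove:
  assumes f: "f \<in> rel_bijections R A B" and a: "a \<in> A"
  shows "f(a := a) \<in> rel_bijections R (A - {a}) (B - {f a})"
proof -
  have "bij_betw f (A - {a}) (B - {f a})"
    using f a by (intro bij_betw_DiffI) (auto simp: rel_bijections_def bij_betw_def)
  then have "bij_betw (f(a := a)) (A - {a}) (B - {f a})"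
    by (rule bij_betw_cong[THEN iffD1, rotated]) auto
  then show ?thesis
    using f by (auto simp: rel_bijections_def)
qed

lemma rel_bijections_insert:
  assumes g: "g \<in> rel_bijections R (A - {a}) (B - {y})"
    and "a \<in> A" "y \<in> B" "R a y"
  shows "g(a := y) \<in> rel_bijections R A B"
proof -
  have "bij_betw g (A - {a}) (B - {y})"
    using g by (simp add: rel_bijections_def)
  then have "bij_betw (g(a := y)) (A - {a}) (B - {y})"
    by (rule bij_betw_cong[THEN iffD1, rotated]) auto
  then have "bij_betw (g(a := y)) (A - {a} \<union> {a}) (B - {y} \<union> {y})"
    by (rule bij_betw_combine) auto
  moreover have "A - {a} \<union> {a} = A" "B - {y} \<union> {y} = B"
    using assms(2,3) by auto
  ultimately show ?thesis
    using assms by (auto simp: rel_bijections_def)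
qed

lemma rel_permanent_expand_row:
  assumes "finite A" "finite B" "a \<in> A"
  shows "rel_permanent R A B = (\<Sum>y | y \<in> B \<and> R a y. rel_permanent R (A - {a}) (B - {y}))"
proof -
  let ?Y = "{y. y \<in> B \<and> R a y}"
  let ?S = "SIGMA y:?Y. rel_bijections R (A - {a}) (B - {y})"
  have "bij_betw (\<lambda>f. (f a, f(a := a))) (rel_bijections R A B) ?S"
  proof (rule bij_betw_byWitness[where f' = "\<lambda>(y, g). g(a := y)"])
    show "\<forall>f\<in>rel_bijections R A B. (\<lambda>(y, g). g(a := y)) (f a, f(a := a)) = f"
      by simp
    show "\<forall>p\<in>?S. (\<lambda>f. (f a, f(a := a))) ((\<lambda>(y, g). g(a := y)) p) = p"
    proof
      fix p assume "p \<in> ?S"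
      then obtain y g where p: "p = (y, g)" and "g \<in> rel_bijections R (A - {a}) (B - {y})"
        by blast
      then have "g a = a" by (simp add: rel_bijections_def)
      then show "(\<lambda>f. (f a, f(a := a))) ((\<lambda>(y, g). g(a := y)) p) = p" using p by auto
    qed
    show "(\<lambda>f. (f a, f(a := a))) ` rel_bijections R A B \<subseteq> ?S"
    proof (rule image_subsetI)
      fix f assume f: "f \<in> rel_bijections R A B"
      then have "f a \<in> ?Y"
        using assms(3) by (auto simp: rel_bijections_def bij_betw_def)
      with rel_bijections_remove[OF f assms(3)] show "(f a, f(a := a)) \<in> ?S" by blast
    qed
    show "(\<lambda>(y, g). g(a := y)) ` ?S \<subseteq> rel_bijections R A B"
    proof (rule image_subsetI)
      fix p assume "p \<in> ?S"
      then obtain y g where p: "p = (y, g)" and "y \<in> B" "R a y"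
        and g: "g \<in> rel_bijections R (A - {a}) (B - {y})" by blast
      then show "(\<lambda>(y, g). g(a := y)) p \<in> rel_bijections R A B"
        using rel_bijections_insert[OF g assms(3)] by simp
    qed
  qed
  then have "rel_permanent R A B = card ?S"
    unfolding rel_permanent_def by (rule bij_betw_same_card)
  also have "\<dots> = (\<Sum>y\<in>?Y. rel_permanent R (A - {a}) (B - {y}))"
    using assms by (subst card_SigmaI) (auto simp: rel_permanent_def finite_rel_bijections)
  finally show ?thesis .
qed

lemma rel_permanent_forced:
  assumes "finite A" "finite B" "a \<in> A" "b \<in> B" "R a b" "\<forall>x\<in>A - {a}. \<not> R x b"
  shows "rel_permanent R A B = rel_permanent R (A - {a}) (B - {b})"
proof -
  have "rel_permanent R A B = (\<Sum>y | y \<in> B \<and> R a y. rel_permanent R (A - {a}) (B - {y}))"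
    using assms(1-3) by (rule rel_permanent_expand_row)
  also have "\<dots> = (\<Sum>y\<in>{b}. rel_permanent R (A - {a}) (B - {y}))"
  proof (rule sum.mono_neutral_right)
    show "finite {y. y \<in> B \<and> R a y}" using assms(2) by simp
    show "{b} \<subseteq> {y. y \<in> B \<and> R a y}" using assms(4,5) by simp
    show "\<forall>y\<in>{y. y \<in> B \<and> R a y} - {b}. rel_permanent R (A - {a}) (B - {y}) = 0"
    proof
      fix y assume "y \<in> {y. y \<in> B \<and> R a y} - {b}"
      then have "b \<in> B - {y}" using assms(4) by auto
      then show "rel_permanent R (A - {a}) (B - {y}) = 0"
        using assms(6) by (rule rel_permanent_eq_0_if_uncovered)
    qed
  qed
  finally show ?thesis by simp
qed

section \<open>Toeplitz permanents with a deleted column\<close>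

lemma rel_bijections_square:
  "rel_bijections R A A = {p. p permutes A \<and> (\<forall>x\<in>A. R x (p x))}"
  by (auto simp: rel_bijections_def permutes_altdef)

definition offset_rel :: "int set \<Rightarrow> nat \<Rightarrow> nat \<Rightarrow> bool" where
  "offset_rel W i j \<longleftrightarrow> int j - int i \<in> W"

lemma P_perm_eq_rel_permanent: "P_perm W n = rel_permanent (offset_rel W) {1..n} {1..n}"
  by (simp add: P_perm_def rel_permanent_def rel_bijections_square offset_rel_def)

abbreviation toeplitz_steps :: "nat \<Rightarrow> int set" where
  "toeplitz_steps m \<equiv> {-2, int m - 1, int m}"

lemma offset_rel_toeplitz_steps:
  "1 \<le> m \<Longrightarrow>
    offset_rel (toeplitz_steps m) i j \<longleftrightarrow> i = j + 2 \<or> j + 1 = i + m \<or> j = i + m"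
  by (auto simp: offset_rel_def)

text \<open>punctured m e K counts the admissible bijections from rows {1..K} onto the columns
  {0..K} - {e} (lemma rel_permanent_punctured); the recursion is the expansion along row 1.\<close>

function punctured :: "nat \<Rightarrow> nat \<Rightarrow> nat \<Rightarrow> nat" where
  "punctured m e K =
     (if K = 0 then (if e = 0 then 1 else 0)
      else if K \<le> e then 0
      else (if e < m then punctured m (m - e - 1) (K - e - 1) else 0)
           + punctured m (m - e) (K - e - 1))"
  by auto
termination by (relation "measure (\<lambda>(m, e, K). K)") auto

declare punctured.simps [simp del]

lemma rel_permanent_forced_chain:
  assumes m: "1 \<le> m" and "j \<le> e" "e < K" "e \<le> m" "b + m \<le> y"
  shows "rel_permanent (offset_rel (toeplitz_steps m)) {b+2..b+K} ({b..b+K} - {b+e, y})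
       = rel_permanent (offset_rel (toeplitz_steps m)) {b+j+2..b+K} ({b+j..b+K} - {b+e, y})"
  using \<open>j \<le> e\<close>
proof (induction j)
  case (Suc j)
  let ?R = "offset_rel (toeplitz_steps m)"
  \<comment> \<open>Column b+j can only be reached by the step -2, i.e. from row b+j+2.\<close>
  have "rel_permanent ?R {b+j+2..b+K} ({b+j..b+K} - {b+e, y})
      = rel_permanent ?R ({b+j+2..b+K} - {b+j+2}) ({b+j..b+K} - {b+e, y} - {b+j})"
    using Suc.prems assms by (intro rel_permanent_forced) (auto simp: offset_rel_toeplitz_steps[OF m])
  also have "{b+j+2..b+K} - {b+j+2} = {b + Suc j + 2..b+K}" by auto
  also have "{b+j..b+K} - {b+e, y} - {b+j} = {b + Suc j..b+K} - {b+e, y}" by auto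
  finally show ?case using Suc by simp
qed simp

lemma rel_permanent_punctured_step:
  assumes m: "1 \<le> m" and "e \<le> m" "e < K"
  shows "rel_permanent (offset_rel (toeplitz_steps m)) {b+1..b+K} ({b..b+K} - {b+e})
       = (\<Sum>y\<in>{b+m, b+m+1} - {b+e}.
            rel_permanent (offset_rel (toeplitz_steps m)) {b+e+2..b+K} ({b+e+1..b+K} - {y}))"
proof -
  let ?R = "offset_rel (toeplitz_steps m)"
  let ?f = "\<lambda>y. rel_permanent ?R {b+e+2..b+K} ({b+e+1..b+K} - {y})"
  let ?Y = "{y. y \<in> {b..b+K} - {b+e} \<and> ?R (b+1) y}"
  have "rel_permanent ?R {b+1..b+K} ({b..b+K} - {b+e})
      = (\<Sum>y\<in>?Y. rel_permanent ?R ({b+1..b+K} - {b+1}) ({b..b+K} - {b+e} - {y}))"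
    using assms by (intro rel_permanent_expand_row) auto
  also have "\<dots> = (\<Sum>y\<in>?Y. ?f y)"
  proof (rule sum.cong)
    fix y assume y: "y \<in> ?Y"
    have "{b+1..b+K} - {b+1} = {b+2..b+K}" "{b..b+K} - {b+e} - {y} = {b..b+K} - {b+e, y}" by auto
    moreover have "b + m \<le> y" using y by (auto simp: offset_rel_toeplitz_steps[OF m])
    moreover have "{b+e..b+K} - {b+e, y} = {b+e+1..b+K} - {y}" by auto
    ultimately show "rel_permanent ?R ({b+1..b+K} - {b+1}) ({b..b+K} - {b+e} - {y}) = ?f y"
      using rel_permanent_forced_chain[OF m order_refl] assms by simp
  qed simp
  also have "\<dots> = (\<Sum>y\<in>{b+m, b+m+1} - {b+e}. ?f y)"
  proof (rule sum.mono_neutral_left)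
    show "?Y \<subseteq> {b+m, b+m+1} - {b+e}" by (auto simp: offset_rel_toeplitz_steps[OF m])
    show "\<forall>y\<in>{b+m, b+m+1} - {b+e} - ?Y. ?f y = 0"
    proof
      fix y assume "y \<in> {b+m, b+m+1} - {b+e} - ?Y"
      then have "b + K < y" by (auto simp: offset_rel_toeplitz_steps[OF m])
      then show "?f y = 0" using assms by (intro rel_permanent_eq_0_if_card_neq) auto
    qed
  qed simp
  finally show ?thesis .
qed

lemma rel_permanent_punctured:
  assumes m: "1 \<le> m" and "e \<le> m"
  shows "rel_permanent (offset_rel (toeplitz_steps m)) {b+1..b+K} ({b..b+K} - {b+e}) = punctured m e K"
  using assms(2)
proof (induction K arbitrary: b e rule: less_induct)
  case (less K)
  let ?R = "offset_rel (toeplitz_steps m)"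
  consider "K = 0" | "0 < K" "K \<le> e" | "e < K" by linarith
  then show ?case
  proof cases
    case 1
    then show ?thesis
      by (cases "e = 0") (auto simp: punctured.simps[where K = 0] intro: rel_permanent_eq_0_if_card_neq)
  next
    case 2
    have "rel_permanent ?R {b+1..b+K} ({b..b+K} - {b+e})
        = (\<Sum>y | y \<in> {b..b+K} - {b+e} \<and> ?R (b+1) y.
             rel_permanent ?R ({b+1..b+K} - {b+1}) ({b..b+K} - {b+e} - {y}))"
      using 2 by (intro rel_permanent_expand_row) auto
    also have "{y. y \<in> {b..b+K} - {b+e} \<and> ?R (b+1) y} = {}"
      using 2 less.prems by (auto simp: offset_rel_toeplitz_steps[OF m])
    finally show ?thesis using 2 by (simp add: punctured.simps[of m e K])
  next
    case 3
    let ?c = "b + e + 1" and ?K' = "K - e - 1"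
    have "rel_permanent ?R {b+1..b+K} ({b..b+K} - {b+e})
        = (\<Sum>y\<in>{b+m, b+m+1} - {b+e}.
             rel_permanent ?R {?c+1..?c+?K'} ({?c..?c+?K'} - {?c + (y - ?c)}))"
      unfolding rel_permanent_punctured_step[OF m less.prems 3]
    proof (intro sum.cong refl arg_cong2[where f = "rel_permanent ?R"])
      fix y assume "y \<in> {b+m, b+m+1} - {b+e}"
      then have "?c \<le> y" using less.prems by auto
      then show "{b+e+1..b+K} - {y} = {?c..?c+?K'} - {?c + (y - ?c)}" using 3 by auto
    qed (use 3 in auto)
    also have "\<dots> = (\<Sum>y\<in>{b+m, b+m+1} - {b+e}. punctured m (y - ?c) ?K')"
      using 3 less.prems by (intro sum.cong refl less.IH) auto
    also have "\<dots> = punctured m e K"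
    proof (cases "e < m")
      case True
      then have "{b+m, b+m+1} - {b+e} = {b+m, b+m+1}" by auto
      then show ?thesis using True 3 by (simp add: punctured.simps[of m e K])
    next
      case False
      then have "{b+m, b+m+1} - {b+e} = {b+m+1}" using less.prems by auto
      then show ?thesis using False 3 by (simp add: punctured.simps[of m e K])
    qed
    finally show ?thesis .
  qed
qed

lemma P_perm_toeplitz_steps:
  assumes "1 \<le> m"
  shows "P_perm (toeplitz_steps m) n = punctured m 0 n"
proof -
  have "{1..n} = {0+1..0+n}" "{1..n} = {0..0+n} - {0+0::nat}" by auto
  then show ?thesis
    using rel_permanent_punctured[OF assms, of 0 0 n] by (simp add: P_perm_eq_rel_permanent)
qed

section \<open>The square and neighbouring products of s_n\<close>

definition s_int :: "nat \<Rightarrow> nat \<Rightarrow> int \<Rightarrow> nat" where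
  "s_int p q i = (if i < 0 then 0 else s_pq p q (nat i))"

lemma s_int_neg [simp]: "i < 0 \<Longrightarrow> s_int p q i = 0"
  by (simp add: s_int_def)

lemma s_int_of_nat [simp]: "s_int p q (int n) = s_pq p q n"
  by (simp add: s_int_def)

lemma s_int_rec:
  assumes "0 < p" "0 < q" "0 \<le> i"
  shows "s_int p q i = (if i = 0 then 1 else 0) + s_int p q (i - int p) + s_int p q (i - int q)"
proof -
  obtain n where n: "i = int n" using assms(3) by (metis nonneg_eq_int)
  have "s_pq p q n = (if n = 0 then 1 else 0) + (if p \<le> n then s_pq p q (n - p) else 0)
      + (if q \<le> n then s_pq p q (n - q) else 0)"
    using assms(1,2) by (subst s_pq.simps) simp
  then show ?thesis by (auto simp: n s_int_def nat_diff_distrib)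
qed

lemma sum_s_int_shift:
  "(\<Sum>k\<le>n. s_int p q (int k - int c) * g (int n - int k))
     = (if c \<le> n then (\<Sum>k\<le>n - c. s_pq p q k * g (int (n - c) - int k)) else 0)"
proof (cases "c \<le> n")
  case True
  have "(\<Sum>k\<le>n. s_int p q (int k - int c) * g (int n - int k))
      = (\<Sum>k\<in>{0 + c..(n - c) + c}. s_int p q (int k - int c) * g (int n - int k))"
    using True by (intro sum.mono_neutral_right) auto
  also have "\<dots> = (\<Sum>k\<le>n - c. s_pq p q k * g (int (n - c) - int k))"
    unfolding sum.shift_bounds_cl_nat_ivl atLeast0AtMost using True
    by (intro sum.cong) (auto simp: algebra_simps)
  finally show ?thesis using True by simp
qed (auto intro!: sum.neutral)

lemma recurrence_eq_convolution:
  assumes "0 < p" "0 < q"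
    and f_neg: "\<And>i. i < 0 \<Longrightarrow> f i = 0"
    and f_rec: "\<And>i. 0 \<le> i \<Longrightarrow> f i = g i + f (i - int p) + f (i - int q)"
  shows "f (int n) = (\<Sum>k\<le>n. s_pq p q k * g (int n - int k))"
proof (induction n rule: less_induct)
  case (less n)
  have shift: "(\<Sum>k\<le>n. s_int p q (int k - int c) * g (int n - int k)) = f (int n - int c)"
    if "0 < c" for c
    using that less.IH[of "n - c"] by (cases "c \<le> n") (simp_all add: sum_s_int_shift f_neg)
  have "(\<Sum>k\<le>n. s_pq p q k * g (int n - int k))
      = (\<Sum>k\<le>n. ((if k = 0 then 1 else 0) + s_int p q (int k - int p) + s_int p q (int k - int q))
                  * g (int n - int k))"
  proof (intro sum.cong refl)
    fix k
    show "s_pq p q k * g (int n - int k)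
        = ((if k = 0 then 1 else 0) + s_int p q (int k - int p) + s_int p q (int k - int q))
          * g (int n - int k)"
      using s_int_rec[OF assms(1,2), of "int k"] by simp
  qed
  also have "\<dots> = g (int n) + f (int n - int p) + f (int n - int q)"
    using assms(1,2)
    by (simp add: sum.distrib distrib_right shift if_distrib[where f = "\<lambda>x. x * _"] cong: if_cong)
  also have "\<dots> = f (int n)"
    using f_rec by simp
  finally show ?case ..
qed

lemma s_pq_square:
  assumes "0 < p" "0 < q"
  shows "(s_pq p q n)^2 = s_pq p q n
           + 2 * (\<Sum>k\<le>n. s_pq p q k
                        * (s_int p q (int (n - k) - int p) * s_int p q (int (n - k) - int q)))"
proof -
  let ?s = "s_int p q"
  have "?s (int n)^2
      = (\<Sum>k\<le>n. s_pq p q k * ((if int n - int k = 0 then 1 else 0)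
                                 + 2 * (?s (int n - int k - int p) * ?s (int n - int k - int q))))"
  proof (rule recurrence_eq_convolution[OF assms])
    fix i :: int assume "0 \<le> i"
    then show "?s i^2 = ((if i = 0 then 1 else 0) + 2 * (?s (i - int p) * ?s (i - int q)))
        + ?s (i - int p)^2 + ?s (i - int q)^2"
      using s_int_rec[OF assms \<open>0 \<le> i\<close>] assms
      by (cases "i = 0") (simp_all add: power2_eq_square algebra_simps)
  qed simp
  also have "\<dots> = s_pq p q n
      + 2 * (\<Sum>k\<le>n. s_pq p q k * (?s (int (n - k) - int p) * ?s (int (n - k) - int q)))"
    by (simp add: sum.distrib sum_distrib_left algebra_simps if_distrib[where f = "\<lambda>x. _ * x"]
        cong: if_cong)
  finally show ?thesis by simp
qed

lemma sum_lessThan_add: "(\<Sum>K<a + b. f K) = (\<Sum>K<a. f K) + (\<Sum>K<b. f (K + a))"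
  for a b :: nat
  by (induction b) (simp_all add: ac_simps)

lemma sum_punctured_unfold:
  assumes "e < N"
  shows "(\<Sum>K<N. punctured m e K * h K)
       = (if e = 0 then h 0 else 0)
         + (\<Sum>K<N - e - 1. ((if e < m then punctured m (m - e - 1) K else 0) + punctured m (m - e) K)
                            * h (K + e + 1))"
proof -
  let ?f = "\<lambda>K. punctured m e K * h K"
  have "(\<Sum>K<N. ?f K) = (\<Sum>K<Suc e. ?f K) + (\<Sum>K<N - e - 1. ?f (K + Suc e))"
    using sum_lessThan_add[where a = "Suc e" and b = "N - e - 1" and f = ?f] assms by simp
  also have "(\<Sum>K<Suc e. ?f K) = (if e = 0 then h 0 else 0)"
    by (subst sum.lessThan_Suc_shift)
      (simp add: punctured.simps[of m e "Suc _"] punctured.simps[of m e 0])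
  also have "(\<Sum>K<N - e - 1. ?f (K + Suc e))
      = (\<Sum>K<N - e - 1. ((if e < m then punctured m (m - e - 1) K else 0) + punctured m (m - e) K)
                        * h (K + e + 1))"
    by (intro sum.cong refl) (subst punctured.simps, simp)
  finally show ?thesis .
qed

lemma s_int_product_expansion:
  fixes M :: int
  assumes m: "1 \<le> m" and "e \<le> m" "M + int e + 1 \<le> int N"
  shows "s_int (m+1) (m+2) (M + int e + 1) * s_int (m+1) (m+2) M
       = (if e = m then (s_int (m+1) (m+2) M)^2 else 0)
         + (\<Sum>K<N. punctured m e K * (s_int (m+1) (m+2) (M + int e - 1 - int K - int m))^2)"
  using assms(2,3)
proof (induction "nat (M + 1)" arbitrary: M e N rule: less_induct)
  case less
  let ?s = "s_int (m+1) (m+2)"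
  show ?case
  proof (cases "M < 0")
    case True
    then show ?thesis using less.prems by (auto intro!: sum.neutral)
  next
    case False
    \<comment> \<open>Expanding the larger factor by the recurrence gives two products of the same shape with
      e replaced by m - e - 1 and m - e; this is the recursion of punctured.\<close>
    let ?N' = "N - e - 1"
    let ?t = "\<lambda>e'. \<Sum>K<?N'. punctured m e' K * (?s (M - 2 - int K - int m))^2"
    have split: "?s (M + int e + 1) = ?s (M + int e - int m) + ?s (M + int e - int m - 1)"
      using s_int_rec[of "m+1" "m+2" "M + int e + 1"] False by (simp add: algebra_simps)
    have far: "?s (M + int e - int m - 1) * ?s M
        = (if e = 0 then (?s (M - int m - 1))^2 else 0) + ?t (m - e)"
      using less.hyps[of "M + int e - int m - 1" "m - e" ?N'] less.prems False m
      by (simp add: algebra_simps)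
    have near: "?s (M + int e - int m) * ?s M
        = (if e = m then (?s M)^2 else 0) + (if e < m then ?t (m - e - 1) else 0)"
    proof (cases "e < m")
      case True
      then show ?thesis
        using less.hyps[of "M + int e - int m" "m - e - 1" ?N'] less.prems False
        by (simp add: algebra_simps)
    qed (use less.prems in \<open>simp add: power2_eq_square\<close>)
    have "(\<Sum>K<N. punctured m e K * (?s (M + int e - 1 - int K - int m))^2)
        = (if e = 0 then (?s (M - int m - 1))^2 else 0)
          + (if e < m then ?t (m - e - 1) else 0) + ?t (m - e)"
      using less.prems False
      by (simp add: sum_punctured_unfold sum.distrib algebra_simps)
    then show ?thesis
      using split far near by (simp add: distrib_right)
  qed
qed

lemma s_int_adjacent_product:
  assumes m: "1 \<le> m"
  shows "s_int (m+1) (m+2) (int j - int (m+1)) * s_int (m+1) (m+2) (int j - int (m+2))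
       = (\<Sum>r=2*m+3..j. P_perm (toeplitz_steps m) (r - (2*m+3)) * (s_pq (m+1) (m+2) (j - r))^2)"
proof -
  let ?s = "s_int (m+1) (m+2)"
  let ?g = "\<lambda>K. punctured m 0 K * (?s (int j - 2 * int m - 3 - int K))^2"
  have "?s (int j - int (m+1)) * ?s (int j - int (m+2)) = (\<Sum>K<j+1. ?g K)"
    using s_int_product_expansion[OF m, of 0 "int j - int m - 2" "j + 1"] m
    by (simp add: algebra_simps)
  also have "\<dots> = (\<Sum>K\<in>{0..j - (2*m+3)}. ?g K)"
    by (rule sum.mono_neutral_right) auto
  also have "\<dots> = (\<Sum>r=2*m+3..j. P_perm (toeplitz_steps m) (r - (2*m+3)) * (s_pq (m+1) (m+2) (j - r))^2)"
  proof (cases "2*m+3 \<le> j")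
    case True
    have ivl: "{2*m+3..j} = {0 + (2*m+3)..(j - (2*m+3)) + (2*m+3)}" using True by simp
    show ?thesis
      unfolding ivl sum.shift_bounds_cl_nat_ivl
    proof (intro sum.cong)
      fix K assume "K \<in> {0..j - (2*m+3)}"
      then have idx: "int j - 2 * int m - 3 - int K = int (j - (K + (2*m+3)))" using True by auto
      show "?g K = P_perm (toeplitz_steps m) (K + (2*m+3) - (2*m+3))
                   * (s_pq (m+1) (m+2) (j - (K + (2*m+3))))^2"
        unfolding idx s_int_of_nat by (simp add: P_perm_toeplitz_steps[OF m])
    qed simp
  qed auto
  finally show ?thesis .
qed

theorem mainTheorem11:
  fixes m n :: nat
  assumes "m \<ge> 1"
  shows "(s_pq (m+1) (m+2) n)^2 =
           s_pq (m+1) (m+2) n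
           + 2 * (\<Sum>k\<in>{k. k + (2*m+3) \<le> n}. \<Sum>r=2*m+3..n-k.
                    P_perm {-2, int m - 1, int m} (r - (2*m+3))
                    * s_pq (m+1) (m+2) k * (s_pq (m+1) (m+2) (n - k - r))^2)"
proof -
  let ?s = "s_pq (m+1) (m+2)" and ?P = "P_perm (toeplitz_steps m)"
  have "?s n^2 = ?s n + 2 * (\<Sum>k\<le>n. ?s k * (\<Sum>r=2*m+3..n-k. ?P (r - (2*m+3)) * ?s (n - k - r)^2))"
    using s_pq_square[of "m+1" "m+2" n] by (simp only: s_int_adjacent_product[OF assms])
  also have "(\<Sum>k\<le>n. ?s k * (\<Sum>r=2*m+3..n-k. ?P (r - (2*m+3)) * ?s (n - k - r)^2))
      = (\<Sum>k\<in>{k. k + (2*m+3) \<le> n}. \<Sum>r=2*m+3..n-k. ?P (r - (2*m+3)) * ?s k * ?s (n - k - r)^2)"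
    by (rule sum.mono_neutral_cong_right) (auto simp: sum_distrib_left ac_simps)
  finally show ?thesis .
qed

end
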